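(* Let $U_0$ be a unitary operator on a Hilbert space $\mathcal{H}$, let $Y$ be a trace class operator on $\mathcal{H}$, and let $\{Q(t,s)\}_{t,s\in\mathbb{N}}$ be bounded operators with $\sup_{t,s}\|Q(t,s)\|<\infty$. Then for every $\psi\in\mathcal{H}_{\rm ac,0}$ the series below converge absolutely and \begin{enumerate} \item $\lim_{t,s\to\infty}\sum_{k=0}^\infty\langle U_0^{k+t}\psi,\,Y Q(t,s)\,U_0^{k+s}\psi\rangle=0$; \item $\lim_{t,s\to\infty}\sum_{k=0}^\infty\langle U_0^{k+t}\psi,\,Q(t,s) Y\,U_0^{k+s}\psi\rangle=0$. \end{enumerate} (In the paper's notation, these are $\langle\psi,Z_{t,s}(YQ(t,s))\psi\rangle$ and $\langle\psi,Z_{t,s}(Q(t,s)Y)\psi\rangle$ with $Z_{t,s}(A)=\sum_{k\ge0}U_0^{-k-t}AU_0^{k+s}$.)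
   Context: With $E_0$ the spectral measure of $U_0$ on $[0,2\pi)$ ($U_0=\int e^{i\lambda}dE_0(\lambda)$), $\mathcal{H}_{\rm ac,0}$ is the set of vectors $\psi$ in the absolutely continuous subspace of $U_0$ such that $d\|E_0(\lambda)\psi\|^2=G_\psi(\lambda)^2d\lambda$ with $G_\psi\in L^2([0,2\pi))\cap L^\infty([0,2\pi))$. *)

theory Defs
  imports "HOL-Analysis.Analysis"
begin

class complex_inner_space = real_normed_vector +
  fixes scaleC :: "complex \<Rightarrow> 'a \<Rightarrow> 'a" (infixr "*\<^sub>C" 75)
    and cinner :: "'a \<Rightarrow> 'a \<Rightarrow> complex"
  assumes scaleC_add_right: "a *\<^sub>C (x + y) = a *\<^sub>C x + a *\<^sub>C y"
    and scaleC_add_left: "(a + b) *\<^sub>C x = a *\<^sub>C x + b *\<^sub>C x"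
    and scaleC_scaleC: "a *\<^sub>C (b *\<^sub>C x) = (a * b) *\<^sub>C x"
    and scaleC_one: "1 *\<^sub>C x = x"
    and scaleC_of_real: "complex_of_real r *\<^sub>C x = r *\<^sub>R x"
    and cinner_add_right: "cinner x (y + z) = cinner x y + cinner x z"
    and cinner_scaleC_right: "cinner x (a *\<^sub>C y) = a * cinner x y"
    and cinner_commute: "cinner y x = cnj (cinner x y)"
    and cinner_self_norm: "cinner x x = complex_of_real ((norm x)\<^sup>2)"

class chilbert_space = complex_inner_space + complete_space

definition clinear_op :: "('a::complex_inner_space \<Rightarrow> 'a) \<Rightarrow> bool" where
  "clinear_op A \<longleftrightarrow> (\<forall>x y. A (x + y) = A x + A y) \<and> (\<forall>a x. A (a *\<^sub>C x) = a *\<^sub>C A x)"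

definition bounded_op :: "('a::complex_inner_space \<Rightarrow> 'a) \<Rightarrow> bool" where
  "bounded_op A \<longleftrightarrow> clinear_op A \<and> (\<exists>K. \<forall>x. norm (A x) \<le> K * norm x)"

definition unitary_op :: "('a::complex_inner_space \<Rightarrow> 'a) \<Rightarrow> bool" where
  "unitary_op U \<longleftrightarrow> clinear_op U \<and> surj U \<and> (\<forall>x. norm (U x) = norm x)"

text \<open>Trace class operators, via the nuclear representation
  \<open>Y x = \<Sum>n \<langle>a n, x\<rangle> b n\<close> with \<open>\<Sum>n \<parallel>a n\<parallel> \<parallel>b n\<parallel> < \<infinity>\<close>
  (in Hilbert space the nuclear operators are exactly the trace class operators;
  the index set can be taken countable since such operators are compact).\<close>
definition trace_class :: "('a::chilbert_space \<Rightarrow> 'a) \<Rightarrow> bool" where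
  "trace_class Y \<longleftrightarrow> (\<exists>a b :: nat \<Rightarrow> 'a.
      summable (\<lambda>n. norm (a n) * norm (b n)) \<and>
      (\<forall>x. Y x = (\<Sum>n. cinner (a n) x *\<^sub>C b n)))"

text \<open>\<open>\<H>_{ac,0}\<close>: vectors whose spectral measure \<open>d\<parallel>E_0(\<lambda>)\<psi>\<parallel>\<^sup>2\<close> w.r.t. \<open>U\<close>
  (on \<open>[0,2\<pi>)\<close>, with \<open>U = \<integral> e^{i\<lambda>} dE_0\<close>) equals \<open>G(\<lambda>)\<^sup>2 d\<lambda>\<close> with
  \<open>G \<in> L\<^sup>2 \<inter> L\<^sup>\<infinity>\<close>. The spectral measure of \<psi> is the unique finite Borel measure
  on \<open>[0,2\<pi>)\<close> whose moments are \<open>\<langle>\<psi>, U^n \<psi>\<rangle>\<close>, \<open>n \<ge> 0\<close> (negative moments are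
  their conjugates), so the condition is expressed through these moments.\<close>
definition H_ac0 :: "('a::chilbert_space \<Rightarrow> 'a) \<Rightarrow> 'a set" where
  "H_ac0 U = {\<psi>. \<exists>G :: real \<Rightarrow> real.
      G \<in> borel_measurable lborel \<and>
      set_integrable lborel {0..<2*pi} (\<lambda>l. (G l)\<^sup>2) \<and>
      (\<exists>B. AE l in lborel. l \<in> {0..<2*pi} \<longrightarrow> \<bar>G l\<bar> \<le> B) \<and>
      (\<forall>n::nat. cinner \<psi> ((U ^^ n) \<psi>) =
          (LINT l:{0..<2*pi}|lborel. exp (\<i> * of_nat n * of_real l) * of_real ((G l)\<^sup>2)))}"

end

theory Submission
  imports Defs
begin

text \<open>
  If \<open>\<psi> \<in> H_ac0 U\<^sub>0\<close> has spectral density \<open>G\<^sup>2\<close> with \<open>|G| \<le> B\<close>, the orbit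
  \<open>f k = U\<^sub>0\<^sup>k \<psi>\<close> is a Bessel sequence: by the moment condition and Parseval's identity,
  \<open>\<parallel>\<Sum>\<^sub>k c\<^sub>k f k\<parallel>\<^sup>2 = \<integral> |\<Sum>\<^sub>k c\<^sub>k e\<^sup>i\<^sup>k\<^sup>\<lambda>|\<^sup>2 G(\<lambda>)\<^sup>2 d\<lambda> \<le> A\<^sup>2 \<Sum>\<^sub>k |c\<^sub>k|\<^sup>2\<close> with \<open>A\<^sup>2 = 2\<pi>B\<^sup>2\<close>,
  and by duality \<open>\<Sum>\<^sub>k |\<langle>z, f k\<rangle>|\<^sup>2 \<le> A\<^sup>2 \<parallel>z\<parallel>\<^sup>2\<close>.
  Writing \<open>Y = \<Sum>\<^sub>n \<langle>a n, \<cdot>\<rangle> b n\<close>, the series for \<open>Y Q(t,s)\<close> becomes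
  \<open>\<Sum>\<^sub>k \<Sum>\<^sub>n \<langle>f (k+t), b n\<rangle> \<langle>a n, Q(t,s) f (k+s)\<rangle>\<close>. Cauchy-Schwarz in \<open>k\<close> bounds the
  \<open>n\<close>-th column by \<open>C A \<parallel>a n\<parallel>\<close> times the \<open>\<ell>\<^sup>2\<close>-norm of the tail \<open>(\<langle>f k, b n\<rangle>)\<^sub>k\<^sub>\<ge>\<^sub>t\<close>, which
  tends to \<open>0\<close> and is at most \<open>A \<parallel>b n\<parallel>\<close>; as \<open>\<Sum>\<^sub>n \<parallel>a n\<parallel> \<parallel>b n\<parallel> < \<infinity>\<close>, Tannery's theorem
  gives the limit. For \<open>Q(t,s) Y\<close> the decaying tail is \<open>(\<langle>a n, f k\<rangle>)\<^sub>k\<^sub>\<ge>\<^sub>s\<close> instead.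
\<close>

instance chilbert_space \<subseteq> banach ..

lemma cinner_add_left: "cinner (x + y) z = cinner x z + cinner y z"
  by (subst (1 2 3) cinner_commute) (simp add: cinner_add_right)

lemma cinner_scaleC_left: "cinner (a *\<^sub>C x) y = cnj a * cinner x y"
  by (subst (1 2) cinner_commute) (simp add: cinner_scaleC_right)

lemma cinner_zero_right [simp]: "cinner x 0 = 0"
  using cinner_add_right[of x 0 0] by simp

lemma cinner_zero_left [simp]: "cinner 0 x = 0"
  using cinner_commute[of 0 x] by simp

lemma cinner_diff_right: "cinner x (y - z) = cinner x y - cinner x z"
proof -
  have "cinner x (y - z) + cinner x z = cinner x y"
    by (simp flip: cinner_add_right)
  then show ?thesis
    by (simp add: eq_diff_eq)
qed

lemma cinner_diff_left: "cinner (x - y) z = cinner x z - cinner y z"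
  by (subst (1 2 3) cinner_commute) (simp add: cinner_diff_right)

lemma cinner_sum_right: "cinner x (sum f A) = (\<Sum>i\<in>A. cinner x (f i))"
  by (induction A rule: infinite_finite_induct) (auto simp: cinner_add_right)

lemma cinner_sum_left: "cinner (sum f A) x = (\<Sum>i\<in>A. cinner (f i) x)"
  by (induction A rule: infinite_finite_induct) (auto simp: cinner_add_left)

lemma cmod_cinner_commute: "cmod (cinner x y) = cmod (cinner y x)"
  by (metis cinner_commute complex_mod_cnj)

lemma Re_cinner_self: "Re (cinner x x) = (norm x)\<^sup>2"
  by (simp add: cinner_self_norm)

lemma norm_add_square:
  "(norm (x + y))\<^sup>2 = (norm x)\<^sup>2 + (norm y)\<^sup>2 + 2 * Re (cinner x y)"
proof -
  have "cinner (x + y) (x + y) = cinner x x + cinner y y + (cinner x y + cnj (cinner x y))"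
    by (simp add: cinner_add_left cinner_add_right algebra_simps flip: cinner_commute)
  then have "Re (cinner (x + y) (x + y)) = Re (cinner x x) + Re (cinner y y) + 2 * Re (cinner x y)"
    by simp
  then show ?thesis
    by (simp only: Re_cinner_self)
qed

lemma cnj_mult_self: "cnj z * z = complex_of_real ((cmod z)\<^sup>2)"
  using complex_norm_square[of z] by (simp add: mult.commute)

lemma norm_scaleC: "norm (a *\<^sub>C x) = cmod a * norm x"
proof -
  have "complex_of_real ((norm (a *\<^sub>C x))\<^sup>2) = cnj a * a * cinner x x"
    unfolding cinner_self_norm[symmetric] by (simp add: cinner_scaleC_left cinner_scaleC_right)
  also have "\<dots> = complex_of_real ((cmod a * norm x)\<^sup>2)"
    by (simp only: cnj_mult_self cinner_self_norm power_mult_distrib of_real_mult)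
  finally show ?thesis
    by (metis norm_ge_zero of_real_eq_iff power2_eq_iff_nonneg zero_le_mult_iff)
qed

lemma Cauchy_Schwarz_cinner: "cmod (cinner x y) \<le> norm x * norm y"
proof (cases "y = 0")
  case False
  define z where "z = cinner x y"
  define n where "n = complex_of_real ((norm y)\<^sup>2)"
  define l where "l = cnj z / n"
  have n: "n \<noteq> 0" "cnj n = n" "cinner y y = n"
    using False by (simp_all add: n_def cinner_self_norm)
  have "complex_of_real ((norm (x - l *\<^sub>C y))\<^sup>2)
      = cinner x x - l * z - cnj l * cnj z + cnj l * l * n"
    unfolding cinner_self_norm[symmetric]
    by (simp add: cinner_diff_left cinner_diff_right cinner_scaleC_left cinner_scaleC_right
        algebra_simps z_def n flip: cinner_commute)
  also have "\<dots> = cinner x x - cnj z * z / n"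
    using n by (simp add: l_def field_simps)
  also have "\<dots> = complex_of_real ((norm x)\<^sup>2 - (cmod z)\<^sup>2 / (norm y)\<^sup>2)"
    by (simp only: cnj_mult_self cinner_self_norm n_def of_real_divide of_real_diff)
  finally have "(cmod z)\<^sup>2 / (norm y)\<^sup>2 \<le> (norm x)\<^sup>2"
    by (metis diff_ge_0_iff_ge of_real_eq_iff zero_le_power2)
  then have "(cmod z)\<^sup>2 \<le> (norm x * norm y)\<^sup>2"
    using False by (simp add: divide_le_eq power_mult_distrib)
  then show ?thesis
    unfolding z_def by (meson norm_ge_zero power2_le_imp_le zero_le_mult_iff)
qed simp

lemma bounded_linear_cinner_right: "bounded_linear (cinner x)"
proof (rule bounded_linear_intro[where K = "norm x"])
  show "cinner x (y + z) = cinner x y + cinner x z" for y z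
    by (rule cinner_add_right)
  show "cinner x (r *\<^sub>R y) = r *\<^sub>R cinner x y" for r y
    by (metis cinner_scaleC_right scaleC_of_real scaleR_conv_of_real)
  show "cmod (cinner x y) \<le> norm y * norm x" for y
    by (metis Cauchy_Schwarz_cinner mult.commute)
qed

lemma clinear_opD:
  assumes "clinear_op A"
  shows "A (x + y) = A x + A y" "A (a *\<^sub>C x) = a *\<^sub>C A x"
  using assms unfolding clinear_op_def by auto

lemma clinear_op_scaleR: "clinear_op A \<Longrightarrow> A (r *\<^sub>R x) = r *\<^sub>R A x"
  by (metis clinear_opD(2) scaleC_of_real)

lemma clinear_op_linear: "clinear_op A \<Longrightarrow> linear A"
  by (simp add: clinear_opD(1) clinear_op_scaleR linearI)

lemma clinear_op_bounded_linear:
  assumes "clinear_op A" "\<And>x. norm (A x) \<le> C * norm x"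
  shows "bounded_linear A"
proof (rule bounded_linear_intro[where K = C])
  show "norm (A x) \<le> norm x * C" for x
    using assms(2) by (simp add: mult.commute)
qed (simp_all add: assms(1) clinear_opD(1) clinear_op_scaleR)

lemma clinear_op_funpow: "clinear_op U \<Longrightarrow> clinear_op (U ^^ n)"
  by (induction n) (auto simp: clinear_op_def)

lemma norm_funpow_isometry:
  fixes U :: "'a::real_normed_vector \<Rightarrow> 'a"
  assumes "\<And>x. norm (U x) = norm x"
  shows "norm ((U ^^ n) x) = norm x"
  by (induction n) (auto simp: assms)

lemma cinner_isometry:
  assumes lin: "clinear_op U" and iso: "\<And>x. norm (U x) = norm x"
  shows "cinner (U x) (U y) = cinner x y"
proof -
  have Re: "Re (cinner (U x) (U y)) = Re (cinner x y)" for x y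
  proof -
    have "norm (U x + U y) = norm (x + y)"
      by (simp add: iso flip: clinear_opD(1)[OF lin])
    then show ?thesis
      using norm_add_square[of "U x" "U y"] norm_add_square[of x y] by (simp add: iso)
  qed
  have "Im (cinner (U x) (U y)) = Im (cinner x y)"
    using Re[of x "\<i> *\<^sub>C y"] by (simp add: clinear_opD(2)[OF lin] cinner_scaleC_right)
  with Re show ?thesis
    by (simp add: complex_eq_iff)
qed

lemma cinner_funpow_isometry:
  assumes lin: "clinear_op U" and iso: "\<And>x. norm (U x) = norm x" and "j \<le> k"
  shows "cinner ((U ^^ j) x) ((U ^^ k) x) = cinner x ((U ^^ (k - j)) x)"
proof -
  have "(U ^^ k) x = (U ^^ j) ((U ^^ (k - j)) x)"
    using \<open>j \<le> k\<close> by (metis funpow_add le_add_diff_inverse o_apply)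
  then show ?thesis
    using cinner_isometry[OF clinear_op_funpow[OF lin] norm_funpow_isometry] iso by simp
qed

section \<open>Bessel sequences\<close>

lemma L2_set_shift_le:
  fixes f :: "nat \<Rightarrow> real"
  shows "L2_set (\<lambda>k. f (k + s)) {..<K} \<le> L2_set f {..<K + s}"
proof -
  have "(\<Sum>k<K. (f (k + s))\<^sup>2) = (\<Sum>k\<in>{s..<K + s}. (f k)\<^sup>2)"
    using sum.shift_bounds_nat_ivl[of "\<lambda>k. (f k)\<^sup>2" 0 s K] by (simp add: atLeast0LessThan)
  also have "\<dots> \<le> (\<Sum>k<K + s. (f k)\<^sup>2)"
    by (rule sum_mono2) auto
  finally show ?thesis
    unfolding L2_set_def by simp
qed

text \<open>\<open>bessel_seq f A\<close> bounds the synthesis operator \<open>c \<mapsto> \<Sum>\<^sub>k c\<^sub>k f\<^sub>k\<close> by \<open>A\<close>;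
  the usual Bessel bound is \<open>A\<^sup>2\<close> (lemma \<open>L2_set_cinner_le_bessel_seq\<close>).\<close>
definition bessel_seq :: "(nat \<Rightarrow> 'a::complex_inner_space) \<Rightarrow> real \<Rightarrow> bool" where
  "bessel_seq f A \<longleftrightarrow> (\<forall>c K. norm (\<Sum>k<K. c k *\<^sub>C f k) \<le> A * L2_set (\<lambda>k. cmod (c k)) {..<K})"

lemma bessel_seq_nonneg:
  assumes "bessel_seq f A"
  shows "0 \<le> A"
proof -
  have "norm (f 0) \<le> A"
    using assms[unfolded bessel_seq_def, rule_format, of "\<lambda>_. 1" 1]
    by (simp add: scaleC_one L2_set_constant)
  then show ?thesis
    using norm_ge_zero order_trans by blast
qed

lemma bessel_seq_comp:
  assumes f: "bessel_seq f A" and Q: "clinear_op Q" "\<And>x. norm (Q x) \<le> C * norm x" and "0 \<le> C"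
  shows "bessel_seq (\<lambda>k. Q (f k)) (C * A)"
  unfolding bessel_seq_def
proof (intro allI)
  fix c K
  let ?v = "\<Sum>k<K. c k *\<^sub>C f k"
  have "norm ?v \<le> A * L2_set (\<lambda>k. cmod (c k)) {..<K}"
    using f unfolding bessel_seq_def by blast
  then have "norm (Q ?v) \<le> C * (A * L2_set (\<lambda>k. cmod (c k)) {..<K})"
    using Q(2)[of ?v] mult_left_mono[of _ _ C] \<open>0 \<le> C\<close> by fastforce
  moreover have "Q ?v = (\<Sum>k<K. c k *\<^sub>C Q (f k))"
    by (simp add: linear_sum[OF clinear_op_linear[OF Q(1)]] clinear_opD(2)[OF Q(1)])
  ultimately show "norm (\<Sum>k<K. c k *\<^sub>C Q (f k)) \<le> C * A * L2_set (\<lambda>k. cmod (c k)) {..<K}"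
    by (simp add: mult.assoc)
qed

lemma L2_set_cinner_le_bessel_seq:
  assumes f: "bessel_seq f A"
  shows "L2_set (\<lambda>k. cmod (cinner z (f k))) {..<K} \<le> A * norm z"
proof -
  define w where "w k = cinner z (f k)" for k
  define X where "X = L2_set (\<lambda>k. cmod (w k)) {..<K}"
  define v where "v = (\<Sum>k<K. cnj (w k) *\<^sub>C f k)"
  have "cinner z v = (\<Sum>k<K. cnj (w k) * w k)"
    by (simp add: v_def w_def cinner_sum_right cinner_scaleC_right)
  also have "\<dots> = complex_of_real (X\<^sup>2)"
    by (simp add: X_def L2_set_def sum_nonneg cnj_mult_self)
  finally have "X\<^sup>2 = cmod (cinner z v)"
    by (simp add: norm_power)
  also have "\<dots> \<le> norm z * norm v"
    by (rule Cauchy_Schwarz_cinner)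
  finally have "X\<^sup>2 \<le> norm z * norm v" .
  moreover have "norm v \<le> A * X"
    using f[unfolded bessel_seq_def, rule_format, of "\<lambda>k. cnj (w k)" K]
    by (simp add: v_def X_def)
  ultimately have "X * X \<le> (A * norm z) * X"
    using mult_left_mono[of "norm v" "A * X" "norm z"]
    by (simp add: power2_eq_square algebra_simps)
  moreover have "0 \<le> A * norm z"
    using bessel_seq_nonneg[OF f] by simp
  moreover have "0 \<le> X"
    by (simp add: X_def)
  ultimately have "X \<le> A * norm z"
    by (cases "X = 0") (auto intro: mult_right_le_imp_le)
  then show ?thesis
    by (simp add: X_def w_def)
qed

lemma L2_set_cinner_le_bessel_seq':
  "bessel_seq f A \<Longrightarrow> L2_set (\<lambda>k. cmod (cinner (f k) z)) {..<K} \<le> A * norm z"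
  using L2_set_cinner_le_bessel_seq[of f A z K] by (simp add: cmod_cinner_commute)

section \<open>Trigonometric polynomials and the spectral estimate\<close>

lemma set_integrable_bounded_mult:
  fixes w :: "'a \<Rightarrow> real"
    and h :: "'a \<Rightarrow> 'b::{real_normed_field, banach, second_countable_topology}"
  assumes w: "set_integrable M A w" "w \<in> borel_measurable M"
    and h: "h \<in> borel_measurable M" "\<And>x. norm (h x) \<le> B"
    and A: "A \<in> sets M"
  shows "set_integrable M A (\<lambda>x. h x * of_real (w x))"
proof (rule set_integrable_bound[where f = "\<lambda>x. B * w x"])
  show "set_integrable M A (\<lambda>x. B * w x)"
    using w(1) by simp
  show "set_borel_measurable M A (\<lambda>x. h x * of_real (w x))"
    unfolding set_borel_measurable_def using w(2) h(1) A by measurable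
  have "0 \<le> B"
    using h(2) norm_ge_zero order_trans by blast
  then show "AE x in M. x \<in> A \<longrightarrow> norm (h x * of_real (w x)) \<le> norm (B * w x)"
    using h(2) by (simp add: norm_mult abs_mult mult_right_mono)
qed

lemma set_integrable_sum:
  fixes f :: "'i \<Rightarrow> 'a \<Rightarrow> 'b::{banach, second_countable_topology}"
  assumes "\<And>i. i \<in> I \<Longrightarrow> set_integrable M A (f i)"
  shows "set_integrable M A (\<lambda>x. \<Sum>i\<in>I. f i x)"
  using assms unfolding set_integrable_def by (simp add: scaleR_sum_right)

lemma set_integral_sum:
  fixes f :: "'i \<Rightarrow> 'a \<Rightarrow> 'b::{banach, second_countable_topology}"
  assumes "\<And>i. i \<in> I \<Longrightarrow> set_integrable M A (f i)"
  shows "(LINT x:A|M. \<Sum>i\<in>I. f i x) = (\<Sum>i\<in>I. LINT x:A|M. f i x)"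
  using assms unfolding set_lebesgue_integral_def set_integrable_def
  by (simp add: scaleR_sum_right Bochner_Integration.integral_sum)

lemma set_integral_exp_int:
  fixes d :: int
  shows "(LINT l:{0..<2*pi}|lborel. exp (\<i> * of_int d * of_real l))
    = (if d = 0 then complex_of_real (2*pi) else 0)"
proof -
  have "(LINT l:{0..<2*pi}|lborel. exp (\<i> * of_int d * of_real l))
      = (LBINT l=ereal 0..ereal (2*pi). exp (\<i> * of_int d * of_real l))"
    by (subst interval_integral_Icc) (auto intro!: set_integral_discrete_difference[where X = "{2*pi}"])
  also have "\<dots> = (if d = 0 then complex_of_real (2*pi) else 0)"
  proof (cases "d = 0")
    case True
    have "(LBINT l=ereal 0..ereal (2*pi). (1::complex)) = of_real (2*pi) - of_real 0"
      by (rule interval_integral_FTC_finite)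
         (auto intro!: continuous_intros derivative_eq_intros has_vector_derivative_real_field)
    with True show ?thesis
      by simp
  next
    case False
    define F where "F z = exp (\<i> * of_int d * z) / (\<i> * of_int d)" for z
    have "(LBINT l=ereal 0..ereal (2*pi). exp (\<i> * of_int d * of_real l))
        = F (of_real (2*pi)) - F (of_real 0)"
      by (rule interval_integral_FTC_finite)
         (use False in \<open>auto intro!: continuous_intros derivative_eq_intros
            has_vector_derivative_real_field simp: F_def\<close>)
    moreover have "exp (\<i> * of_int d * of_real (2*pi)) = 1"
      using exp_integer_2pi[of "2 * of_int d"] by (simp add: algebra_simps)
    ultimately show ?thesis
      using False by (simp add: F_def)
  qed
  finally show ?thesis .
qed

lemma cnj_exp_mult_exp:
  "cnj (exp (\<i> * of_nat j * of_real l)) * exp (\<i> * of_nat k * of_real l)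
     = exp (\<i> * of_int (int k - int j) * of_real l)"
  by (simp add: exp_cnj algebra_simps flip: exp_add)

lemma cmod_trig_poly_sq:
  "complex_of_real ((cmod (\<Sum>k<K. c k * exp (\<i> * of_nat k * of_real l)))\<^sup>2)
     = (\<Sum>j<K. \<Sum>k<K. cnj (c j) * c k * exp (\<i> * of_int (int k - int j) * of_real l))"
proof -
  let ?e = "\<lambda>k. exp (\<i> * of_nat k * of_real l)"
  have "complex_of_real ((cmod (\<Sum>k<K. c k * ?e k))\<^sup>2) = cnj (\<Sum>k<K. c k * ?e k) * (\<Sum>k<K. c k * ?e k)"
    by (rule cnj_mult_self[symmetric])
  also have "\<dots> = (\<Sum>j<K. \<Sum>k<K. cnj (c j * ?e j) * (c k * ?e k))"
    by (simp only: cnj_sum sum_product)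
  also have "\<dots> = (\<Sum>j<K. \<Sum>k<K. cnj (c j) * c k * exp (\<i> * of_int (int k - int j) * of_real l))"
    unfolding cnj_exp_mult_exp[symmetric] complex_cnj_mult by (simp only: ac_simps)
  finally show ?thesis .
qed

lemma set_integral_cmod_trig_poly_sq_weight:
  fixes w :: "real \<Rightarrow> real"
  assumes w: "w \<in> borel_measurable lborel" "set_integrable lborel {0..<2*pi} w"
  shows "complex_of_real
      (LINT l:{0..<2*pi}|lborel. (cmod (\<Sum>k<K. c k * exp (\<i> * of_nat k * of_real l)))\<^sup>2 * w l)
    = (\<Sum>j<K. \<Sum>k<K. cnj (c j) * c k *
        (LINT l:{0..<2*pi}|lborel. exp (\<i> * of_int (int k - int j) * of_real l) * of_real (w l)))"
proof -
  let ?e = "\<lambda>d l. exp (\<i> * of_int d * of_real l) * complex_of_real (w l)"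
  have int: "set_integrable lborel {0..<2*pi} (?e d)" for d
    by (rule set_integrable_bounded_mult[OF w(2,1), where B = 1])
       (auto intro!: borel_measurable_continuous_onI continuous_intros simp: norm_exp_eq_Re)
  have "complex_of_real
      (LINT l:{0..<2*pi}|lborel. (cmod (\<Sum>k<K. c k * exp (\<i> * of_nat k * of_real l)))\<^sup>2 * w l)
    = (LINT l:{0..<2*pi}|lborel. \<Sum>j<K. \<Sum>k<K. cnj (c j) * c k * ?e (int k - int j) l)"
    unfolding set_integral_complex_of_real[symmetric] of_real_mult cmod_trig_poly_sq
    by (simp add: sum_distrib_right mult.assoc)
  also have "\<dots> = (\<Sum>j<K. LINT l:{0..<2*pi}|lborel. \<Sum>k<K. cnj (c j) * c k * ?e (int k - int j) l)"
    by (intro set_integral_sum set_integrable_sum set_integrable_mult_right int)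
  also have "\<dots> = (\<Sum>j<K. \<Sum>k<K. LINT l:{0..<2*pi}|lborel. cnj (c j) * c k * ?e (int k - int j) l)"
    by (intro sum.cong refl set_integral_sum set_integrable_mult_right int)
  finally show ?thesis
    by (simp only: set_integral_mult_right)
qed

lemma set_integral_cmod_trig_poly_sq:
  "(LINT l:{0..<2*pi}|lborel. (cmod (\<Sum>k<K. c k * exp (\<i> * of_nat k * of_real l)))\<^sup>2)
    = 2 * pi * (\<Sum>k<K. (cmod (c k))\<^sup>2)"
proof -
  have "complex_of_real
      (LINT l:{0..<2*pi}|lborel. (cmod (\<Sum>k<K. c k * exp (\<i> * of_nat k * of_real l)))\<^sup>2 * 1)
    = (\<Sum>j<K. \<Sum>k<K. cnj (c j) * c k *
        (LINT l:{0..<2*pi}|lborel. exp (\<i> * of_int (int k - int j) * of_real l) * of_real 1))"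
    by (rule set_integral_cmod_trig_poly_sq_weight) (simp_all add: set_integrable_def)
  also have "\<dots> = (\<Sum>j<K. complex_of_real (2 * pi * (cmod (c j))\<^sup>2))"
    unfolding of_real_1 mult_1_right set_integral_exp_int
    by (simp add: cnj_mult_self if_distrib[where f = "\<lambda>x. _ * x"] cong: if_cong) (simp add: mult_ac)
  also have "\<dots> = complex_of_real (2 * pi * (\<Sum>k<K. (cmod (c k))\<^sup>2))"
    by (simp only: of_real_sum sum_distrib_left)
  finally show ?thesis
    by (simp only: mult_1_right of_real_eq_iff)
qed

lemma cnj_set_integral_exp_weight:
  "cnj (LINT l:{0..<2*pi}|lborel. exp (\<i> * of_int d * of_real l) * of_real (w l))
    = (LINT l:{0..<2*pi}|lborel. exp (\<i> * of_int (- d) * of_real l) * of_real (w l))"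
  unfolding set_lebesgue_integral_def
  by (subst Bochner_Integration.integral_cnj[symmetric])
     (auto intro!: Bochner_Integration.integral_cong simp: exp_cnj scaleR_conv_of_real)

lemma cinner_funpow_moment:
  fixes U :: "'a::complex_inner_space \<Rightarrow> 'a" and w :: "real \<Rightarrow> real"
  assumes lin: "clinear_op U" and iso: "\<And>x. norm (U x) = norm x"
    and mom: "\<forall>n::nat. cinner \<psi> ((U ^^ n) \<psi>)
      = (LINT l:{0..<2*pi}|lborel. exp (\<i> * of_nat n * of_real l) * of_real (w l))"
  shows "cinner ((U ^^ j) \<psi>) ((U ^^ k) \<psi>)
      = (LINT l:{0..<2*pi}|lborel. exp (\<i> * of_int (int k - int j) * of_real l) * of_real (w l))"
proof -
  have le: "cinner ((U ^^ j) \<psi>) ((U ^^ k) \<psi>)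
      = (LINT l:{0..<2*pi}|lborel. exp (\<i> * of_int (int k - int j) * of_real l) * of_real (w l))"
    if "j \<le> k" for j k
    using cinner_funpow_isometry[OF lin iso that] mom that by (simp add: of_nat_diff)
  show ?thesis
  proof (cases "j \<le> k")
    case False
    have "cinner ((U ^^ j) \<psi>) ((U ^^ k) \<psi>) = cnj (cinner ((U ^^ k) \<psi>) ((U ^^ j) \<psi>))"
      by (rule cinner_commute)
    also have "cinner ((U ^^ k) \<psi>) ((U ^^ j) \<psi>)
        = (LINT l:{0..<2*pi}|lborel. exp (\<i> * of_int (int j - int k) * of_real l) * of_real (w l))"
      using False by (intro le) simp
    also have "cnj \<dots>
        = (LINT l:{0..<2*pi}|lborel. exp (\<i> * of_int (- (int j - int k)) * of_real l) * of_real (w l))"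
      by (rule cnj_set_integral_exp_weight)
    finally show ?thesis
      by simp
  qed (rule le)
qed

lemma set_integral_cmod_trig_poly_sq_le:
  fixes w :: "real \<Rightarrow> real"
  assumes w: "w \<in> borel_measurable lborel" "set_integrable lborel {0..<2*pi} w"
    and wM: "AE l in lborel. l \<in> {0..<2*pi} \<longrightarrow> w l \<le> M"
  shows "(LINT l:{0..<2*pi}|lborel. (cmod (\<Sum>k<K. c k * exp (\<i> * of_nat k * of_real l)))\<^sup>2 * w l)
    \<le> 2 * pi * M * (\<Sum>k<K. (cmod (c k))\<^sup>2)"
proof -
  let ?p = "\<lambda>l. (cmod (\<Sum>k<K. c k * exp (\<i> * of_nat k * of_real l)))\<^sup>2"
  have p_meas: "?p \<in> borel_measurable lborel"
    by (auto intro!: borel_measurable_continuous_onI continuous_intros)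
  have p_bound: "norm (?p l) \<le> (\<Sum>k<K. cmod (c k))\<^sup>2" for l
  proof -
    have "cmod (\<Sum>k<K. c k * exp (\<i> * of_nat k * of_real l)) \<le> (\<Sum>k<K. cmod (c k))"
      using norm_sum[of "\<lambda>k. c k * exp (\<i> * of_nat k * of_real l)" "{..<K}"]
      by (simp add: norm_mult norm_exp_eq_Re)
    then show ?thesis
      by (simp add: power_mono)
  qed
  have "(LINT l:{0..<2*pi}|lborel. ?p l * w l) \<le> (LINT l:{0..<2*pi}|lborel. ?p l * M)"
  proof (rule set_integral_mono_AE)
    show "set_integrable lborel {0..<2*pi} (\<lambda>l. ?p l * w l)"
      using set_integrable_bounded_mult[OF w(2,1) p_meas p_bound] by simp
    show "set_integrable lborel {0..<2*pi} (\<lambda>l. ?p l * M)"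
      using set_integrable_bounded_mult[where A = "{0..<2*pi}" and w = "\<lambda>_. M",
          OF _ _ p_meas p_bound]
      by (simp add: set_integrable_def)
    show "AE l\<in>{0..<2*pi} in lborel. ?p l * w l \<le> ?p l * M"
      using wM by eventually_elim (simp add: mult_left_mono)
  qed
  also have "\<dots> = 2 * pi * M * (\<Sum>k<K. (cmod (c k))\<^sup>2)"
    by (simp add: set_integral_cmod_trig_poly_sq)
  finally show ?thesis .
qed

lemma norm_sum_funpow_sq:
  fixes U :: "'a::complex_inner_space \<Rightarrow> 'a" and w :: "real \<Rightarrow> real"
  assumes lin: "clinear_op U" and iso: "\<And>x. norm (U x) = norm x"
    and mom: "\<forall>n::nat. cinner \<psi> ((U ^^ n) \<psi>)
      = (LINT l:{0..<2*pi}|lborel. exp (\<i> * of_nat n * of_real l) * of_real (w l))"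
    and w: "w \<in> borel_measurable lborel" "set_integrable lborel {0..<2*pi} w"
  shows "(norm (\<Sum>k<K. c k *\<^sub>C (U ^^ k) \<psi>))\<^sup>2
    = (LINT l:{0..<2*pi}|lborel. (cmod (\<Sum>k<K. c k * exp (\<i> * of_nat k * of_real l)))\<^sup>2 * w l)"
proof -
  have "complex_of_real ((norm (\<Sum>k<K. c k *\<^sub>C (U ^^ k) \<psi>))\<^sup>2)
      = (\<Sum>j<K. \<Sum>k<K. cnj (c j) * c k * cinner ((U ^^ j) \<psi>) ((U ^^ k) \<psi>))"
    unfolding cinner_self_norm[symmetric]
    by (simp add: cinner_sum_left cinner_sum_right cinner_scaleC_left cinner_scaleC_right
        sum_distrib_left mult.assoc) (subst sum.swap, simp add: ac_simps)
  also have "\<dots> = complex_of_real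
      (LINT l:{0..<2*pi}|lborel. (cmod (\<Sum>k<K. c k * exp (\<i> * of_nat k * of_real l)))\<^sup>2 * w l)"
    unfolding cinner_funpow_moment[OF lin iso mom]
    by (rule set_integral_cmod_trig_poly_sq_weight[OF w, symmetric])
  finally show ?thesis
    by (simp only: of_real_eq_iff)
qed

lemma H_ac0_bessel_seq:
  fixes U :: "'a::chilbert_space \<Rightarrow> 'a"
  assumes lin: "clinear_op U" and iso: "\<And>x. norm (U x) = norm x" and "\<psi> \<in> H_ac0 U"
  shows "\<exists>A. bessel_seq (\<lambda>k. (U ^^ k) \<psi>) A"
proof -
  obtain G :: "real \<Rightarrow> real" and B where Gm: "G \<in> borel_measurable lborel"
    and Gi: "set_integrable lborel {0..<2*pi} (\<lambda>l. (G l)\<^sup>2)"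
    and GB: "AE l in lborel. l \<in> {0..<2*pi} \<longrightarrow> \<bar>G l\<bar> \<le> B"
    and mom: "\<forall>n::nat. cinner \<psi> ((U ^^ n) \<psi>) =
          (LINT l:{0..<2*pi}|lborel. exp (\<i> * of_nat n * of_real l) * of_real ((G l)\<^sup>2))"
    using \<open>\<psi> \<in> H_ac0 U\<close> unfolding H_ac0_def by blast
  have G2m: "(\<lambda>l. (G l)\<^sup>2) \<in> borel_measurable lborel"
    using Gm by measurable
  have G2B: "AE l in lborel. l \<in> {0..<2*pi} \<longrightarrow> (G l)\<^sup>2 \<le> B\<^sup>2"
    using GB by eventually_elim (auto dest: power_mono[OF _ abs_ge_zero, of _ _ 2])
  have "norm (\<Sum>k<K. c k *\<^sub>C (U ^^ k) \<psi>) \<le> sqrt (2 * pi) * \<bar>B\<bar> * L2_set (\<lambda>k. cmod (c k)) {..<K}"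
    for c K
  proof (rule power2_le_imp_le)
    have "(norm (\<Sum>k<K. c k *\<^sub>C (U ^^ k) \<psi>))\<^sup>2 \<le> 2 * pi * B\<^sup>2 * (\<Sum>k<K. (cmod (c k))\<^sup>2)"
      unfolding norm_sum_funpow_sq[OF lin iso mom G2m Gi]
      by (rule set_integral_cmod_trig_poly_sq_le[OF G2m Gi G2B])
    also have "\<dots> = (sqrt (2 * pi) * \<bar>B\<bar> * L2_set (\<lambda>k. cmod (c k)) {..<K})\<^sup>2"
      by (simp add: L2_set_def power_mult_distrib sum_nonneg)
    finally show "(norm (\<Sum>k<K. c k *\<^sub>C (U ^^ k) \<psi>))\<^sup>2 \<le> \<dots>" .
  qed simp
  then show ?thesis
    unfolding bessel_seq_def by blast
qed

section \<open>Double series\<close>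

lemma suminf_tail_tendsto_zero:
  fixes f :: "nat \<Rightarrow> real"
  assumes "summable f"
  shows "(\<lambda>s. \<Sum>k. f (k + s)) \<longlonglongrightarrow> 0"
proof -
  have "(\<lambda>s. \<Sum>k. f (k + s)) = (\<lambda>s. suminf f - (\<Sum>k<s. f k))"
    using suminf_split_initial_segment[OF assms] by (auto simp: algebra_simps)
  then show ?thesis
    using tendsto_diff[OF tendsto_const[of "suminf f"] summable_LIMSEQ[OF assms]] by simp
qed

lemma summable_sq_L2_set_bounded:
  fixes g :: "nat \<Rightarrow> real"
  assumes "\<And>K. L2_set g {..<K} \<le> E"
  shows "summable (\<lambda>k. (g k)\<^sup>2)" and "sqrt (\<Sum>k. (g k)\<^sup>2) \<le> E"
proof -
  have "(\<Sum>k<K. (g k)\<^sup>2) \<le> E\<^sup>2" for K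
    using assms[of K] by (simp add: L2_set_def sqrt_le_D)
  then show sm: "summable (\<lambda>k. (g k)\<^sup>2)"
    by (intro summableI_nonneg_bounded) auto
  have "0 \<le> E"
    using assms[of 0] by simp
  with \<open>\<And>K. (\<Sum>k<K. (g k)\<^sup>2) \<le> E\<^sup>2\<close> show "sqrt (\<Sum>k. (g k)\<^sup>2) \<le> E"
    by (simp add: real_le_lsqrt suminf_le_const[OF sm])
qed

definition L2_tail :: "(nat \<Rightarrow> real) \<Rightarrow> nat \<Rightarrow> real" where
  "L2_tail g s = sqrt (\<Sum>k. (g (k + s))\<^sup>2)"

lemma L2_tail_bounds:
  fixes g :: "nat \<Rightarrow> real"
  assumes g: "\<And>K. L2_set g {..<K} \<le> E"
  shows "L2_set (\<lambda>k. g (k + s)) {..<K} \<le> L2_tail g s" and "0 \<le> L2_tail g s"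
    and "L2_tail g s \<le> E" and "L2_tail g \<longlonglongrightarrow> 0"
proof -
  have g_shift: "L2_set (\<lambda>k. g (k + s)) {..<K} \<le> E" for s K
    using L2_set_shift_le[of g] g order_trans by blast
  have sm: "summable (\<lambda>k. (g (k + s))\<^sup>2)" for s
    by (rule summable_sq_L2_set_bounded(1)[OF g_shift])
  show "L2_set (\<lambda>k. g (k + s)) {..<K} \<le> L2_tail g s"
    unfolding L2_tail_def L2_set_def by (simp add: sum_le_suminf[OF sm])
  show "0 \<le> L2_tail g s"
    by (simp add: L2_tail_def suminf_nonneg[OF sm])
  show "L2_tail g s \<le> E"
    unfolding L2_tail_def by (rule summable_sq_L2_set_bounded(2)[OF g_shift])
  show "L2_tail g \<longlonglongrightarrow> 0"
    using tendsto_real_sqrt[OF suminf_tail_tendsto_zero[OF sm[of 0]]]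
    by (simp add: L2_tail_def[abs_def])
qed

lemma norm_suminf_suminf_products_le:
  fixes x y :: "nat \<Rightarrow> nat \<Rightarrow> complex" and S D :: "nat \<Rightarrow> real"
  assumes x: "\<And>n K. L2_set (\<lambda>k. cmod (x n k)) {..<K} \<le> S n"
    and y: "\<And>n K. L2_set (\<lambda>k. cmod (y n k)) {..<K} \<le> D n"
    and SD: "summable (\<lambda>n. S n * D n)"
  shows "summable (\<lambda>k. cmod (\<Sum>n. x n k * y n k))"
    and "cmod (\<Sum>k. \<Sum>n. x n k * y n k) \<le> (\<Sum>n. S n * D n)"
proof -
  have S0: "0 \<le> S n" and D0: "0 \<le> D n" for n
    using x[of n 0] y[of n 0] by simp_all
  have xS: "cmod (x n k) \<le> S n" and yD: "cmod (y n k) \<le> D n" for n k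
    using member_le_L2_set[of "{..<Suc k}" k "\<lambda>k. cmod (x n k)"] x[of n "Suc k"]
      member_le_L2_set[of "{..<Suc k}" k "\<lambda>k. cmod (y n k)"] y[of n "Suc k"]
    by simp_all
  have sm: "summable (\<lambda>n. cmod (x n k) * cmod (y n k))" for k
    by (rule summable_comparison_test[OF _ SD]) (auto intro!: mult_mono xS yD S0)
  have partial: "(\<Sum>k<K. cmod (\<Sum>n. x n k * y n k)) \<le> (\<Sum>n. S n * D n)" for K
  proof -
    have "(\<Sum>k<K. cmod (\<Sum>n. x n k * y n k)) \<le> (\<Sum>k<K. \<Sum>n. cmod (x n k) * cmod (y n k))"
      using summable_norm[of "\<lambda>n. x n _ * y n _"] sm by (intro sum_mono) (simp add: norm_mult)
    also have "\<dots> = (\<Sum>n. \<Sum>k<K. cmod (x n k) * cmod (y n k))"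
      by (rule suminf_sum[OF sm, symmetric])
    also have "\<dots> \<le> (\<Sum>n. S n * D n)"
    proof (rule suminf_le[OF _ summable_sum[OF sm] SD])
      fix n
      have "(\<Sum>k<K. cmod (x n k) * cmod (y n k))
          \<le> L2_set (\<lambda>k. cmod (x n k)) {..<K} * L2_set (\<lambda>k. cmod (y n k)) {..<K}"
        using L2_set_mult_ineq[of "\<lambda>k. cmod (x n k)" "\<lambda>k. cmod (y n k)" "{..<K}"] by simp
      also have "\<dots> \<le> S n * D n"
        by (intro mult_mono x y) (simp_all add: S0)
      finally show "(\<Sum>k<K. cmod (x n k) * cmod (y n k)) \<le> S n * D n" .
    qed
    finally show ?thesis .
  qed
  show sm': "summable (\<lambda>k. cmod (\<Sum>n. x n k * y n k))"
    by (rule summableI_nonneg_bounded[OF _ partial]) simp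
  show "cmod (\<Sum>k. \<Sum>n. x n k * y n k) \<le> (\<Sum>n. S n * D n)"
    using summable_norm[OF sm'] suminf_le_const[OF sm' partial] by simp
qed

lemma tendsto_suminf_tail_products_zero:
  fixes g :: "nat \<Rightarrow> nat \<Rightarrow> complex" and y :: "'p \<Rightarrow> nat \<Rightarrow> nat \<Rightarrow> complex"
    and \<tau> :: "'p \<Rightarrow> nat"
  assumes g: "\<And>n K. L2_set (\<lambda>k. cmod (g n k)) {..<K} \<le> E n"
    and y: "\<And>p n K. L2_set (\<lambda>k. cmod (y p n k)) {..<K} \<le> D n"
    and ED: "summable (\<lambda>n. E n * D n)"
    and \<tau>: "filterlim \<tau> at_top F"
  shows "summable (\<lambda>k. cmod (\<Sum>n. g n (k + \<tau> p) * y p n k))"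
    and "((\<lambda>p. \<Sum>k. \<Sum>n. g n (k + \<tau> p) * y p n k) \<longlongrightarrow> 0) F"
proof -
  define T where "T n = L2_tail (\<lambda>k. cmod (g n k))" for n
  note T_bounds = L2_tail_bounds[of "\<lambda>k. cmod (g n k)" "E n" for n, OF g, folded T_def]
  have D0: "0 \<le> D n" for n
    using y[of undefined n 0] by simp
  have gT: "L2_set (\<lambda>k. cmod (g n (k + s))) {..<K} \<le> T n s" for n s K
    by (rule T_bounds(1))
  have T0: "0 \<le> T n s" and TE: "T n s \<le> E n" for n s
    by (rule T_bounds(2), rule T_bounds(3))
  have T_tendsto: "((\<lambda>p. T n (\<tau> p)) \<longlongrightarrow> 0) F" for n
    by (rule filterlim_compose[OF T_bounds(4) \<tau>])
  have TD: "summable (\<lambda>n. T n (\<tau> p) * D n)" for p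
    by (rule summable_comparison_test[OF _ ED])
       (auto intro!: exI[of _ 0] mult_right_mono TE D0 simp: abs_mult T0 D0)
  show "summable (\<lambda>k. cmod (\<Sum>n. g n (k + \<tau> p) * y p n k))"
    by (rule norm_suminf_suminf_products_le(1)[OF gT y TD])
  have bound: "norm (\<Sum>k. \<Sum>n. g n (k + \<tau> p) * y p n k) \<le> (\<Sum>n. T n (\<tau> p) * D n)" for p
    by (rule norm_suminf_suminf_products_le(2)[OF gT y TD])
  have "((\<lambda>p. \<Sum>n. T n (\<tau> p) * D n) \<longlongrightarrow> 0) F"
  proof (cases "F = bot")
    case False
    have "((\<lambda>p. T n (\<tau> p) * D n) \<longlongrightarrow> 0) F" for n
      using tendsto_mult_left_zero[OF T_tendsto] .
    then have "((\<lambda>p. \<Sum>n. T n (\<tau> p) * D n) \<longlongrightarrow> (\<Sum>n. 0)) F"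
      by (rule tannerys_theorem[THEN conjunct2, THEN conjunct2, OF _ _ ED False])
         (auto intro!: always_eventually mult_right_mono TE simp: abs_mult T0 D0)
    then show ?thesis
      by simp
  qed simp
  then show "((\<lambda>p. \<Sum>k. \<Sum>n. g n (k + \<tau> p) * y p n k) \<longlongrightarrow> 0) F"
    by (rule Lim_null_comparison[OF always_eventually[OF allI[OF bound]]])
qed

section \<open>Trace class perturbations\<close>

lemma cinner_nuclear_expansion:
  fixes a b :: "nat \<Rightarrow> 'a::chilbert_space"
  assumes ab: "summable (\<lambda>n. norm (a n) * norm (b n))"
    and Q: "clinear_op Q" "\<And>x. norm (Q x) \<le> C * norm x"
  shows "cinner u (Q (\<Sum>n. cinner (a n) v *\<^sub>C b n)) = (\<Sum>n. cinner (a n) v * cinner u (Q (b n)))"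
proof -
  have "norm (cinner (a n) v *\<^sub>C b n) \<le> norm v * (norm (a n) * norm (b n))" for n
    using mult_right_mono[OF Cauchy_Schwarz_cinner[of "a n" v] norm_ge_zero[of "b n"]]
    by (simp add: norm_scaleC mult_ac)
  then have "summable (\<lambda>n. norm (cinner (a n) v *\<^sub>C b n))"
    by (intro summable_comparison_test[OF _ summable_mult[OF ab, of "norm v"]]) auto
  then have "summable (\<lambda>n. cinner (a n) v *\<^sub>C b n)"
    by (rule summable_norm_cancel)
  moreover have "bounded_linear (\<lambda>w. cinner u (Q w))"
    using bounded_linear_compose[OF bounded_linear_cinner_right clinear_op_bounded_linear[OF Q]] .
  ultimately have "cinner u (Q (\<Sum>n. cinner (a n) v *\<^sub>C b n))
      = (\<Sum>n. cinner u (Q (cinner (a n) v *\<^sub>C b n)))"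
    by (intro bounded_linear.suminf)
  then show ?thesis
    by (simp add: clinear_opD(2)[OF Q(1)] cinner_scaleC_right)
qed

lemma clinear_op_id: "clinear_op (\<lambda>x. x)"
  by (simp add: clinear_op_def)

context
  fixes f :: "nat \<Rightarrow> 'a::chilbert_space" and Y :: "'a \<Rightarrow> 'a" and Q :: "nat \<Rightarrow> nat \<Rightarrow> 'a \<Rightarrow> 'a"
    and A C :: real
  assumes f: "bessel_seq f A" and Y: "trace_class Y"
    and Q: "\<And>t s. clinear_op (Q t s)" and QC: "\<And>t s x. norm (Q t s x) \<le> C * norm x"
    and C: "0 \<le> C"
begin

lemma L2_set_cinner_comp_shift_le:
  "L2_set (\<lambda>k. cmod (cinner z (Q t s (f (k + j))))) {..<K} \<le> C * A * norm z"
  using L2_set_shift_le[of "\<lambda>k. cmod (cinner z (Q t s (f k)))"]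
    L2_set_cinner_le_bessel_seq[OF bessel_seq_comp[OF f Q QC C]] order_trans by blast

lemma suminf_cinner_trace_class_comp_tendsto_zero:
  "(\<forall>t s. summable (\<lambda>k. norm (cinner (f (k + t)) (Y (Q t s (f (k + s)))))))
   \<and> ((\<lambda>(t, s). \<Sum>k. cinner (f (k + t)) (Y (Q t s (f (k + s))))) \<longlongrightarrow> 0)
       (sequentially \<times>\<^sub>F sequentially)"
proof -
  obtain a b where ab: "summable (\<lambda>n. norm (a n) * norm (b n))"
    and Yab: "\<And>x. Y x = (\<Sum>n. cinner (a n) x *\<^sub>C b n)"
    using Y unfolding trace_class_def by blast
  have expand: "cinner (f (k + t)) (Y (Q t s (f (k + s))))
      = (\<Sum>n. cinner (f (k + t)) (b n) * cinner (a n) (Q t s (f (k + s))))" for k t s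
    using cinner_nuclear_expansion[OF ab clinear_op_id, of 1] by (simp add: Yab mult.commute)
  let ?g = "\<lambda>n k. cinner (f k) (b n)"
    and ?y = "\<lambda>p n k. cinner (a n) (Q (fst p) (snd p) (f (k + snd p)))"
  have "summable (\<lambda>n. A * norm (b n) * (C * A * norm (a n)))"
    using summable_mult[OF ab, of "C * A * A"] by (simp add: mult_ac)
  note tails = tendsto_suminf_tail_products_zero[where g = ?g and y = ?y and \<tau> = fst,
      OF L2_set_cinner_le_bessel_seq'[OF f] L2_set_cinner_comp_shift_le this filterlim_fst]
  show ?thesis
  proof (intro conjI allI)
    show "summable (\<lambda>k. norm (cinner (f (k + t)) (Y (Q t s (f (k + s))))))" for t s
      using tails(1)[of "(t, s)"] by (simp add: expand)
    show "((\<lambda>(t, s). \<Sum>k. cinner (f (k + t)) (Y (Q t s (f (k + s))))) \<longlongrightarrow> 0)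
        (sequentially \<times>\<^sub>F sequentially)"
      using tails(2) by (simp add: expand case_prod_beta')
  qed
qed

lemma suminf_cinner_comp_trace_class_tendsto_zero:
  "(\<forall>t s. summable (\<lambda>k. norm (cinner (f (k + t)) (Q t s (Y (f (k + s)))))))
   \<and> ((\<lambda>(t, s). \<Sum>k. cinner (f (k + t)) (Q t s (Y (f (k + s))))) \<longlongrightarrow> 0)
       (sequentially \<times>\<^sub>F sequentially)"
proof -
  obtain a b where ab: "summable (\<lambda>n. norm (a n) * norm (b n))"
    and Yab: "\<And>x. Y x = (\<Sum>n. cinner (a n) x *\<^sub>C b n)"
    using Y unfolding trace_class_def by blast
  have expand: "cinner (f (k + t)) (Q t s (Y (f (k + s))))
      = (\<Sum>n. cinner (a n) (f (k + s)) * cinner (f (k + t)) (Q t s (b n)))" for k t s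
    unfolding Yab by (rule cinner_nuclear_expansion[OF ab Q QC])
  have y: "L2_set (\<lambda>k. cmod (cinner (f (k + t)) (Q t s (b n)))) {..<K} \<le> A * (C * norm (b n))"
    for t s n K
  proof -
    have "L2_set (\<lambda>k. cmod (cinner (f (k + t)) (Q t s (b n)))) {..<K} \<le> A * norm (Q t s (b n))"
      using L2_set_shift_le[of "\<lambda>k. cmod (cinner (f k) (Q t s (b n)))"]
        L2_set_cinner_le_bessel_seq'[OF f] order_trans by blast
    also have "\<dots> \<le> A * (C * norm (b n))"
      by (intro mult_left_mono QC bessel_seq_nonneg[OF f])
    finally show ?thesis .
  qed
  let ?g = "\<lambda>n k. cinner (a n) (f k)"
    and ?y = "\<lambda>p n k. cinner (f (k + fst p)) (Q (fst p) (snd p) (b n))"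
  have "summable (\<lambda>n. A * norm (a n) * (A * (C * norm (b n))))"
    using summable_mult[OF ab, of "A * A * C"] by (simp add: mult_ac)
  note tails = tendsto_suminf_tail_products_zero[where g = ?g and y = ?y and \<tau> = snd,
      OF L2_set_cinner_le_bessel_seq[OF f] y this filterlim_snd]
  show ?thesis
  proof (intro conjI allI)
    show "summable (\<lambda>k. norm (cinner (f (k + t)) (Q t s (Y (f (k + s))))))" for t s
      using tails(1)[of "(t, s)"] by (simp add: expand)
    show "((\<lambda>(t, s). \<Sum>k. cinner (f (k + t)) (Q t s (Y (f (k + s))))) \<longlongrightarrow> 0)
        (sequentially \<times>\<^sub>F sequentially)"
      using tails(2) by (simp add: expand case_prod_beta')
  qed
qed

end

theorem lemma3p5:
  fixes U0 Y :: "'a::chilbert_space \<Rightarrow> 'a"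
    and Q :: "nat \<Rightarrow> nat \<Rightarrow> 'a \<Rightarrow> 'a"
    and \<psi> :: 'a
  assumes "unitary_op U0"
    and "trace_class Y"
    and "\<forall>t s. bounded_op (Q t s)"
    and "\<exists>C. \<forall>t s x. norm (Q t s x) \<le> C * norm x"
    and "\<psi> \<in> H_ac0 U0"
  shows "(\<forall>t s. summable (\<lambda>k. norm (cinner ((U0 ^^ (k + t)) \<psi>) (Y (Q t s ((U0 ^^ (k + s)) \<psi>))))))
       \<and> (\<forall>t s. summable (\<lambda>k. norm (cinner ((U0 ^^ (k + t)) \<psi>) (Q t s (Y ((U0 ^^ (k + s)) \<psi>))))))
       \<and> ((\<lambda>(t, s). \<Sum>k. cinner ((U0 ^^ (k + t)) \<psi>) (Y (Q t s ((U0 ^^ (k + s)) \<psi>))))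
            \<longlongrightarrow> 0) (sequentially \<times>\<^sub>F sequentially)
       \<and> ((\<lambda>(t, s). \<Sum>k. cinner ((U0 ^^ (k + t)) \<psi>) (Q t s (Y ((U0 ^^ (k + s)) \<psi>))))
            \<longlongrightarrow> 0) (sequentially \<times>\<^sub>F sequentially)"
proof -
  have lin: "clinear_op U0" and iso: "\<And>x. norm (U0 x) = norm x"
    using assms(1) unfolding unitary_op_def by auto
  obtain A where f: "bessel_seq (\<lambda>k. (U0 ^^ k) \<psi>) A"
    using H_ac0_bessel_seq[OF lin iso assms(5)] by blast
  obtain C where "\<forall>t s x. norm (Q t s x) \<le> C * norm x"
    using assms(4) by blast
  then have QC: "norm (Q t s x) \<le> \<bar>C\<bar> * norm x" for t s x
    by (meson abs_ge_self mult_right_mono norm_ge_zero order_trans)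
  have Q: "clinear_op (Q t s)" for t s
    using assms(3) unfolding bounded_op_def by blast
  show ?thesis
    using suminf_cinner_trace_class_comp_tendsto_zero[where Q = Q, OF f assms(2) Q QC abs_ge_zero]
      suminf_cinner_comp_trace_class_tendsto_zero[where Q = Q, OF f assms(2) Q QC abs_ge_zero]
    by blast
qed

end
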